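(* Let $G$ be a finite simple graph. Then $\eta(G)$ equals the maximum number of pairwise vertex-disjoint cycles in $G$ (this maximum being $0$ if $G$ is a forest).
   Context: A finite simple graph $G$ is regarded as a simplicial complex of dimension at most $1$. Its face poset $\mathcal{F}(G)$ is the directed graph whose vertices are the vertices and the edges of $G$, with a directed edge $e\to v$ whenever $v$ is an endpoint of the edge $e$ of $G$. A matching on $\mathcal{F}(G)$ is a set $m$ of edges of $\mathcal{F}(G)$, no two of which share an endpoint. Given a matching $m$, let $\mathcal{F}_m(G)$ be the directed graph obtained from $\mathcal{F}(G)$ by reversing the orientation of every edge in $m$; a directed cycle of $\mathcal{F}_m(G)$ (closed directed path with no repeated vertices) is said to be supported by $m$, and $J(m)$ is the number of directed cycles supported by $m$. The matching complex $\mathrm{M}(G)$ is the simplicial complex whose vertex set is the set of edges of $\mathcal{F}(G)$ and whose simplices are the nonempty matchings; $\mathrm{M}_k(G)$ is the subcomplex of simplices (matchings) $m$ with $J(m)\le k$. $\eta(G)$ is the smallest integer $k\ge0$ with $\mathrm{M}_k(G)=\mathrm{M}(G)$. A cycle of $G$ is a subgraph homeomorphic to a circle. *)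

theory Defs
  imports Main
begin

definition simple_graph :: "'a set \<Rightarrow> 'a set set \<Rightarrow> bool" where
  "simple_graph V E \<longleftrightarrow> finite V \<and> (\<forall>e\<in>E. \<exists>u v. u \<in> V \<and> v \<in> V \<and> u \<noteq> v \<and> e = {u, v})"

datatype 'a face = FVert 'a | FEdge "'a set"

definition face_arcs :: "'a set \<Rightarrow> 'a set set \<Rightarrow> ('a face \<times> 'a face) set" where
  "face_arcs V E = {(FEdge e, FVert v) | e v. e \<in> E \<and> v \<in> e}"

definition face_matching :: "'a set \<Rightarrow> 'a set set \<Rightarrow> ('a face \<times> 'a face) set \<Rightarrow> bool" where
  "face_matching V E m \<longleftrightarrow> m \<subseteq> face_arcs V E \<and>
     (\<forall>a\<in>m. \<forall>b\<in>m. a \<noteq> b \<longrightarrow> {fst a, snd a} \<inter> {fst b, snd b} = {})"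

definition reversed_arcs :: "'a set \<Rightarrow> 'a set set \<Rightarrow> ('a face \<times> 'a face) set \<Rightarrow> ('a face \<times> 'a face) set" where
  "reversed_arcs V E m = {(x, y). ((x, y) \<in> face_arcs V E \<and> (x, y) \<notin> m) \<or> (y, x) \<in> m}"

definition is_dcycle :: "('b \<times> 'b) set \<Rightarrow> 'b list \<Rightarrow> bool" where
  "is_dcycle A xs \<longleftrightarrow> xs \<noteq> [] \<and> distinct xs \<and>
     (\<forall>i < length xs. (xs ! i, xs ! (Suc i mod length xs)) \<in> A)"

(* The set of arcs traversed by such a cycle (identifies rotations) *)
definition cycle_arcs :: "'b list \<Rightarrow> ('b \<times> 'b) set" where
  "cycle_arcs xs = {(xs ! i, xs ! (Suc i mod length xs)) | i. i < length xs}"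

definition J :: "'a set \<Rightarrow> 'a set set \<Rightarrow> ('a face \<times> 'a face) set \<Rightarrow> nat" where
  "J V E m = card {cycle_arcs xs | xs. is_dcycle (reversed_arcs V E m) xs}"

(* eta(G): least k with M_k(G) = M(G), i.e. every (nonempty) matching m has J(m) \<le> k *)
definition eta :: "'a set \<Rightarrow> 'a set set \<Rightarrow> nat" where
  "eta V E = (LEAST k. \<forall>m. face_matching V E m \<and> m \<noteq> {} \<longrightarrow> J V E m \<le> k)"

definition graph_cycle :: "'a set \<Rightarrow> 'a set set \<Rightarrow> 'a list \<Rightarrow> bool" where
  "graph_cycle V E xs \<longleftrightarrow> length xs \<ge> 3 \<and> distinct xs \<and> set xs \<subseteq> V \<and>
     (\<forall>i < length xs. {xs ! i, xs ! (Suc i mod length xs)} \<in> E)"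

definition max_disjoint_cycles :: "'a set \<Rightarrow> 'a set set \<Rightarrow> nat" where
  "max_disjoint_cycles V E = Max {k. \<exists>cs. length cs = k \<and> (\<forall>c\<in>set cs. graph_cycle V E c) \<and>
      (\<forall>i < k. \<forall>j < k. i \<noteq> j \<longrightarrow> set (cs ! i) \<inter> set (cs ! j) = {})}"

end

theory Submission
  imports Defs
begin

(* In F_m(G) a vertex has at most one outgoing arc (to the edge matched with it), and an edge that
   is entered at all is entered from its matched endpoint and left only towards its other endpoint.
   So every node of a directed cycle has a unique successor: a directed cycle is determined by any
   of its nodes, distinct directed cycles are disjoint, and the vertices of a directed cycle, read
   in order, form a cycle of G.  Hence J(m) is at most the maximal number of disjoint cycles.
   Conversely, for disjoint cycles c_0 c_1 ... c_(n-1) of G, matching every edge {c_i, c_(i+1)}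
   with c_i turns each of them into a directed cycle c_0 {c_0,c_1} c_1 {c_1,c_2} ... of F_m(G),
   so that J(m) >= n for this matching. *)

section \<open>Directed cycles of a relation\<close>

lemma mod_less_of_less: "i < n \<Longrightarrow> k mod n < (n::nat)"
  by (metis less_nat_zero_code mod_less_divisor neq0_conv)

lemma is_dcycle_arc:
  "is_dcycle A xs \<Longrightarrow> i < length xs \<Longrightarrow> (xs ! i, xs ! (Suc i mod length xs)) \<in> A"
  unfolding is_dcycle_def by auto

lemma is_dcycle_in_Range:
  assumes "is_dcycle A xs" "x \<in> set xs"
  shows "x \<in> Range A"
proof -
  obtain i where i: "i < length xs" "x = xs ! i" using assms(2) by (auto simp: in_set_conv_nth)
  let ?n = "length xs"
  have "Suc ((i + ?n - 1) mod ?n) mod ?n = Suc (i + ?n - 1) mod ?n" by (simp add: mod_Suc_eq)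
  also have "Suc (i + ?n - 1) = i + ?n" using i by simp
  also have "(i + ?n) mod ?n = i" using i by simp
  finally have "Suc ((i + ?n - 1) mod ?n) mod ?n = i" .
  moreover have "(i + ?n - 1) mod ?n < ?n" by (rule mod_less_of_less[OF i(1)])
  ultimately show ?thesis using is_dcycle_arc[OF assms(1), of "(i + ?n - 1) mod ?n"] i by force
qed

lemma is_dcycle_rotate1: "is_dcycle A xs \<Longrightarrow> is_dcycle A (rotate1 xs)"
proof -
  assume dc: "is_dcycle A xs"
  let ?n = "length xs"
  have "(rotate1 xs ! i, rotate1 xs ! (Suc i mod ?n)) \<in> A" if i: "i < ?n" for i
  proof -
    have si: "Suc i mod ?n < ?n" by (rule mod_less_of_less[OF i])
    show ?thesis using is_dcycle_arc[OF dc si] nth_rotate1[OF i] nth_rotate1[OF si] by simp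
  qed
  then show ?thesis using dc unfolding is_dcycle_def by simp
qed

lemma finite_dcycle_arcs:
  "finite A \<Longrightarrow> finite {cycle_arcs xs | xs. is_dcycle A xs}"
proof -
  assume "finite A"
  moreover have "{cycle_arcs xs | xs. is_dcycle A xs} \<subseteq> Pow A"
    using is_dcycle_arc unfolding cycle_arcs_def by blast
  ultimately show ?thesis by (meson finite_Pow_iff finite_subset)
qed

lemma Domain_cycle_arcs: "Domain (cycle_arcs xs) = set xs"
  unfolding cycle_arcs_def by (force simp: in_set_conv_nth)

text \<open>In a relation where every node that can be entered has at most one successor, directed
  cycles behave like the orbits of a partial permutation.\<close>

definition single_valued_on_Range :: "('b \<times> 'b) set \<Rightarrow> bool" where
  "single_valued_on_Range A \<longleftrightarrow> (\<forall>x\<in>Range A. \<forall>y y'. (x, y) \<in> A \<longrightarrow> (x, y') \<in> A \<longrightarrow> y = y')"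

lemma is_dcycle_succ:
  assumes sv: "single_valued_on_Range A" and dc: "is_dcycle A xs"
    and i: "i < length xs" and xy: "(xs ! i, y) \<in> A"
  shows "y = xs ! (Suc i mod length xs)"
  using sv xy is_dcycle_arc[OF dc i] is_dcycle_in_Range[OF dc nth_mem[OF i]]
  unfolding single_valued_on_Range_def by blast

lemma is_dcycle_succ_mem:
  assumes "single_valued_on_Range A" "is_dcycle A xs" "x \<in> set xs" "(x, y) \<in> A"
  shows "y \<in> set xs"
proof -
  obtain i where i: "i < length xs" "x = xs ! i" using assms(3) by (auto simp: in_set_conv_nth)
  have "Suc i mod length xs < length xs" by (rule mod_less_of_less[OF i(1)])
  then show ?thesis using is_dcycle_succ[OF assms(1,2) i(1)] assms(4) i(2) by (metis nth_mem)
qed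

lemma cycle_arcs_eq:
  assumes sv: "single_valued_on_Range A" and dc: "is_dcycle A xs"
  shows "cycle_arcs xs = {(x, y). x \<in> set xs \<and> (x, y) \<in> A}"
proof (intro equalityI subsetI)
  fix a assume "a \<in> cycle_arcs xs"
  then show "a \<in> {(x, y). x \<in> set xs \<and> (x, y) \<in> A}"
    using is_dcycle_arc[OF dc] unfolding cycle_arcs_def by auto
next
  fix a assume "a \<in> {(x, y). x \<in> set xs \<and> (x, y) \<in> A}"
  then obtain i y where i: "i < length xs" "a = (xs ! i, y)" "(xs ! i, y) \<in> A"
    by (auto simp: in_set_conv_nth)
  then show "a \<in> cycle_arcs xs"
    using is_dcycle_succ[OF sv dc i(1) i(3)] unfolding cycle_arcs_def by blast
qed

lemma is_dcycle_set_subset: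
  assumes sv: "single_valued_on_Range A" and dc: "is_dcycle A xs" "is_dcycle A ys"
    and x: "x \<in> set xs" "x \<in> set ys"
  shows "set xs \<subseteq> set ys"
proof
  obtain i where i: "i < length xs" "x = xs ! i" using x(1) by (auto simp: in_set_conv_nth)
  let ?n = "length xs"
  have walk: "xs ! ((i + k) mod ?n) \<in> set ys" for k
  proof (induction k)
    case 0
    then show ?case using i x(2) by simp
  next
    case (Suc k)
    have "(i + k) mod ?n < ?n" by (rule mod_less_of_less[OF i(1)])
    from is_dcycle_arc[OF dc(1) this]
    have "(xs ! ((i + k) mod ?n), xs ! ((i + Suc k) mod ?n)) \<in> A" by (simp add: mod_Suc_eq)
    then show ?case using is_dcycle_succ_mem[OF sv dc(2) Suc] by blast
  qed
  fix y assume "y \<in> set xs"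
  then obtain j where j: "j < ?n" "y = xs ! j" by (auto simp: in_set_conv_nth)
  have "(i + (?n - i + j)) mod ?n = j" using i j by simp
  then show "y \<in> set ys" using walk[of "?n - i + j"] j by simp
qed

lemma cycle_arcs_eq_if_meet:
  assumes "single_valued_on_Range A" "is_dcycle A xs" "is_dcycle A ys" "x \<in> set xs" "x \<in> set ys"
  shows "cycle_arcs xs = cycle_arcs ys"
  using is_dcycle_set_subset[OF assms] is_dcycle_set_subset[OF assms(1,3,2,5,4)]
    cycle_arcs_eq[OF assms(1,2)] cycle_arcs_eq[OF assms(1,3)] by auto

section \<open>The face poset reversed along a matching\<close>

lemma simple_graph_edge_subset: "simple_graph V E \<Longrightarrow> e \<in> E \<Longrightarrow> e \<subseteq> V"
  unfolding simple_graph_def by fastforce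

lemma simple_graph_edge_eq:
  assumes "simple_graph V E" "e \<in> E" "a \<in> e" "b \<in> e" "a \<noteq> b"
  shows "e = {a, b}"
proof -
  obtain u v where "e = {u, v}" using assms(1,2) unfolding simple_graph_def by blast
  then show ?thesis using assms(3-5) by auto
qed

lemma face_arcs_iff:
  "(x, y) \<in> face_arcs V E \<longleftrightarrow> (\<exists>e v. x = FEdge e \<and> y = FVert v \<and> e \<in> E \<and> v \<in> e)"
  unfolding face_arcs_def by auto

lemma reversed_arcs_iff:
  "(x, y) \<in> reversed_arcs V E m \<longleftrightarrow> ((x, y) \<in> face_arcs V E \<and> (x, y) \<notin> m) \<or> (y, x) \<in> m"
  unfolding reversed_arcs_def by auto

lemma face_matching_arc: "face_matching V E m \<Longrightarrow> a \<in> m \<Longrightarrow> a \<in> face_arcs V E"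
  unfolding face_matching_def by auto

lemma face_matching_eq:
  assumes "face_matching V E m" "a \<in> m" "b \<in> m"
    and "fst a = fst b \<or> snd a = snd b \<or> fst a = snd b \<or> snd a = fst b"
  shows "a = b"
  using assms unfolding face_matching_def by blast

lemma finite_reversed_arcs:
  assumes sg: "simple_graph V E" and fm: "face_matching V E m"
  shows "finite (reversed_arcs V E m)"
proof -
  have "E \<subseteq> Pow V" using simple_graph_edge_subset[OF sg] by blast
  then have "finite E" using sg unfolding simple_graph_def by (meson finite_Pow_iff finite_subset)
  moreover have "face_arcs V E \<subseteq> FEdge ` E \<times> FVert ` V"
    unfolding face_arcs_def using simple_graph_edge_subset[OF sg] by blast
  ultimately have "finite (face_arcs V E)"
    using sg unfolding simple_graph_def by (meson finite_SigmaI finite_imageI finite_subset)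
  moreover have "reversed_arcs V E m \<subseteq> face_arcs V E \<union> converse (face_arcs V E)"
    using face_matching_arc[OF fm] unfolding reversed_arcs_def by auto
  ultimately show ?thesis by (meson finite_Un finite_converse finite_subset)
qed

lemma reversed_arc_from_vertex:
  assumes "face_matching V E m" "(FVert v, y) \<in> reversed_arcs V E m"
  shows "\<exists>e. y = FEdge e \<and> (FEdge e, FVert v) \<in> m"
  using assms face_matching_arc[OF assms(1)] by (fastforce simp: reversed_arcs_iff face_arcs_iff)

lemma reversed_arc_from_edge:
  assumes "face_matching V E m" "(FEdge e, y) \<in> reversed_arcs V E m"
  shows "\<exists>w. y = FVert w \<and> e \<in> E \<and> w \<in> e \<and> (FEdge e, FVert w) \<notin> m"
  using assms face_matching_arc[OF assms(1)] by (fastforce simp: reversed_arcs_iff face_arcs_iff)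

lemma reversed_arc_to_edge:
  assumes "face_matching V E m" "(x, FEdge e) \<in> reversed_arcs V E m"
  shows "\<exists>v. x = FVert v \<and> (FEdge e, FVert v) \<in> m"
  using assms face_matching_arc[OF assms(1)] by (fastforce simp: reversed_arcs_iff face_arcs_iff)

lemma reversed_arc_alternates:
  assumes "face_matching V E m" "(x, y) \<in> reversed_arcs V E m"
  shows "y \<in> range FVert \<longleftrightarrow> x \<notin> range FVert"
proof (cases x)
  case (FVert v)
  then show ?thesis using reversed_arc_from_vertex[OF assms(1)] assms(2) by fastforce
next
  case (FEdge e)
  then show ?thesis using reversed_arc_from_edge[OF assms(1)] assms(2) by fastforce
qed

lemma single_valued_on_Range_reversed_arcs:
  assumes sg: "simple_graph V E" and fm: "face_matching V E m"
  shows "single_valued_on_Range (reversed_arcs V E m)"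
  unfolding single_valued_on_Range_def
proof (intro ballI allI impI)
  fix x y y'
  assume "x \<in> Range (reversed_arcs V E m)"
    and xy: "(x, y) \<in> reversed_arcs V E m" and xy': "(x, y') \<in> reversed_arcs V E m"
  then obtain p where px: "(p, x) \<in> reversed_arcs V E m" by blast
  show "y = y'"
  proof (cases x)
    case (FVert v)
    then obtain e e' where "y = FEdge e" "(FEdge e, FVert v) \<in> m" "y' = FEdge e'" "(FEdge e', FVert v) \<in> m"
      using reversed_arc_from_vertex[OF fm] xy xy' by metis
    then show ?thesis using face_matching_eq[OF fm, of "(FEdge e, FVert v)" "(FEdge e', FVert v)"] by auto
  next
    case (FEdge e)
    text \<open>The edge is entered from its matched endpoint v and left towards a different one.\<close>
    obtain v where v: "(FEdge e, FVert v) \<in> m" using reversed_arc_to_edge[OF fm] px FEdge by metis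
    obtain w where w: "y = FVert w" "e \<in> E" "w \<in> e" "(FEdge e, FVert w) \<notin> m"
      using reversed_arc_from_edge[OF fm] xy FEdge by metis
    obtain w' where w': "y' = FVert w'" "w' \<in> e" "(FEdge e, FVert w') \<notin> m"
      using reversed_arc_from_edge[OF fm] xy' FEdge by metis
    have "v \<in> e" using face_matching_arc[OF fm v] by (simp add: face_arcs_iff)
    then show ?thesis using simple_graph_edge_eq[OF sg w(2) \<open>v \<in> e\<close>] v w w' by (metis insertE singletonD)
  qed
qed

section \<open>Directed cycles yield cycles of the graph\<close>

lemma is_dcycle_rotate_to_vertex:
  assumes fm: "face_matching V E m" and dc: "is_dcycle (reversed_arcs V E m) xs"
  obtains ys where "is_dcycle (reversed_arcs V E m) ys" "set ys = set xs" "ys ! 0 \<in> range FVert"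
proof (cases "xs ! 0 \<in> range FVert")
  case True
  then show ?thesis using dc that by blast
next
  case False
  have n: "length xs > 0" using dc unfolding is_dcycle_def by auto
  have "xs ! (Suc 0 mod length xs) \<in> range FVert"
    using iffD2[OF reversed_arc_alternates[OF fm is_dcycle_arc[OF dc n]] False] .
  then show ?thesis using that is_dcycle_rotate1[OF dc] nth_rotate1[OF n] by simp
qed

lemma is_dcycle_parity:
  assumes fm: "face_matching V E m" and dc: "is_dcycle (reversed_arcs V E m) ys"
    and v0: "ys ! 0 \<in> range FVert"
  shows "j < length ys \<Longrightarrow> ys ! j \<in> range FVert \<longleftrightarrow> even j" and "even (length ys)"
proof -
  show alt: "ys ! j \<in> range FVert \<longleftrightarrow> even j" if "j < length ys" for j
    using that
  proof (induction j)
    case 0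
    then show ?case using v0 by simp
  next
    case (Suc j)
    then have "(ys ! j, ys ! Suc j) \<in> reversed_arcs V E m" using is_dcycle_arc[OF dc, of j] by simp
    with reversed_arc_alternates[OF fm this] show ?case using Suc by simp
  qed
  let ?n = "length ys"
  have n: "?n > 0" using dc unfolding is_dcycle_def by auto
  then have last: "?n - 1 < ?n" and wrap: "Suc (?n - 1) mod ?n = 0" by simp_all
  have arc: "(ys ! (?n - 1), ys ! 0) \<in> reversed_arcs V E m" using is_dcycle_arc[OF dc last] wrap by simp
  have "ys ! (?n - 1) \<notin> range FVert" using reversed_arc_alternates[OF fm arc] v0 by metis
  then have "odd (?n - 1)" using alt[OF last] by metis
  then show "even ?n" using n by simp
qed

lemma is_dcycle_vertex_edge_vertex:
  assumes sg: "simple_graph V E" and fm: "face_matching V E m"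
    and dc: "is_dcycle (reversed_arcs V E m) ys" and v0: "ys ! 0 \<in> range FVert"
    and k: "length ys = 2 * k" and j: "j < k"
  obtains a b where "ys ! (2 * j) = FVert a" "ys ! (2 * (Suc j mod k)) = FVert b" "a \<noteq> b"
    "ys ! (2 * j + 1) = FEdge {a, b}" "{a, b} \<in> E"
proof -
  let ?A = "reversed_arcs V E m"
  have "2 * j < length ys" using k j by simp
  then have "ys ! (2 * j) \<in> range FVert" by (rule iffD2[OF is_dcycle_parity(1)[OF fm dc v0]]) simp
  then obtain a where a: "ys ! (2 * j) = FVert a" by blast
  have "(ys ! (2 * j), ys ! (2 * j + 1)) \<in> ?A" using is_dcycle_arc[OF dc, of "2 * j"] k j by simp
  then obtain e where e: "ys ! (2 * j + 1) = FEdge e" "(FEdge e, FVert a) \<in> m"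
    using reversed_arc_from_vertex[OF fm] a by metis
  have "Suc (2 * j + 1) mod length ys = 2 * (Suc j mod k)" using k by (simp add: mult_mod_right)
  then have "(ys ! (2 * j + 1), ys ! (2 * (Suc j mod k))) \<in> ?A"
    using is_dcycle_arc[OF dc, of "2 * j + 1"] k j by simp
  then obtain b where b: "ys ! (2 * (Suc j mod k)) = FVert b" "e \<in> E" "b \<in> e" "(FEdge e, FVert b) \<notin> m"
    using reversed_arc_from_edge[OF fm] e by metis
  have "a \<in> e" using face_matching_arc[OF fm e(2)] by (simp add: face_arcs_iff)
  moreover have "a \<noteq> b" using b(4) e(2) by auto
  ultimately have "e = {a, b}" using simple_graph_edge_eq[OF sg b(2)] b(3) by blast
  then show ?thesis using that a b e \<open>a \<noteq> b\<close> by blast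
qed

lemma is_dcycle_vertex_list:
  assumes sg: "simple_graph V E" and fm: "face_matching V E m"
    and dc: "is_dcycle (reversed_arcs V E m) ys" and v0: "ys ! 0 \<in> range FVert"
    and k: "length ys = 2 * k"
  obtains vs where "length vs = k" "\<And>j. j < k \<Longrightarrow> ys ! (2 * j) = FVert (vs ! j)"
    "\<And>j. j < k \<Longrightarrow> ys ! (2 * j + 1) = FEdge {vs ! j, vs ! (Suc j mod k)}"
    "\<And>j. j < k \<Longrightarrow> {vs ! j, vs ! (Suc j mod k)} \<in> E"
    "\<And>j. j < k \<Longrightarrow> vs ! j \<noteq> vs ! (Suc j mod k)"
proof
  define vs where "vs = map (\<lambda>j. inv FVert (ys ! (2 * j))) [0..<k]"
  show len: "length vs = k" unfolding vs_def by simp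
  have inj: "inj (FVert :: 'a \<Rightarrow> 'a face)" unfolding inj_def by simp
  have vertex: "ys ! (2 * j) = FVert (vs ! j)" if j: "j < k" for j
  proof -
    obtain a b where "ys ! (2 * j) = FVert a"  "ys ! (2 * (Suc j mod k)) = FVert b" "a \<noteq> b"
      "ys ! (2 * j + 1) = FEdge {a, b}" "{a, b} \<in> E"
      by (rule is_dcycle_vertex_edge_vertex[OF sg fm dc v0 k j])
    moreover have "vs ! j = inv FVert (ys ! (2 * j))" unfolding vs_def using j by simp
    ultimately show ?thesis using inv_f_f[OF inj] by simp
  qed
  then show "ys ! (2 * j) = FVert (vs ! j)" if "j < k" for j using that .
  fix j assume j: "j < k"
  obtain a b where ab: "ys ! (2 * j) = FVert a" "ys ! (2 * (Suc j mod k)) = FVert b" "a \<noteq> b"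
    "ys ! (2 * j + 1) = FEdge {a, b}" "{a, b} \<in> E"
    by (rule is_dcycle_vertex_edge_vertex[OF sg fm dc v0 k j])
  have "Suc j mod k < k" using j by (rule mod_less_of_less)
  then have "vs ! j = a" "vs ! (Suc j mod k) = b" using ab(1,2) vertex j by simp_all
  then show "ys ! (2 * j + 1) = FEdge {vs ! j, vs ! (Suc j mod k)}" "{vs ! j, vs ! (Suc j mod k)} \<in> E"
    "vs ! j \<noteq> vs ! (Suc j mod k)"
    using ab by simp_all
qed

text \<open>A directed cycle through k vertices has length 2k; k = 1 would need a loop and
  k = 2 would pass twice through the same edge.\<close>

lemma graph_cycle_of_dcycle:
  assumes sg: "simple_graph V E" and fm: "face_matching V E m"
    and dc0: "is_dcycle (reversed_arcs V E m) xs"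
  obtains vs where "graph_cycle V E vs" "FVert ` set vs \<subseteq> set xs"
proof -
  obtain ys where dc: "is_dcycle (reversed_arcs V E m) ys" and ys: "set ys = set xs"
    and v0: "ys ! 0 \<in> range FVert"
    using is_dcycle_rotate_to_vertex[OF fm dc0] by blast
  obtain k where k: "length ys = 2 * k" using is_dcycle_parity(2)[OF fm dc v0] by (metis evenE)
  obtain vs where len: "length vs = k" and vertex: "\<And>j. j < k \<Longrightarrow> ys ! (2 * j) = FVert (vs ! j)"
    and edge: "\<And>j. j < k \<Longrightarrow> ys ! (2 * j + 1) = FEdge {vs ! j, vs ! (Suc j mod k)}"
      "\<And>j. j < k \<Longrightarrow> {vs ! j, vs ! (Suc j mod k)} \<in> E"
      "\<And>j. j < k \<Longrightarrow> vs ! j \<noteq> vs ! (Suc j mod k)"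
    using is_dcycle_vertex_list[OF sg fm dc v0 k] by blast
  have dys: "distinct ys" and "k > 0" using dc k unfolding is_dcycle_def by (auto intro: gr0I)
  have "k \<noteq> 1" using edge(3)[of 0] by auto
  moreover have "k \<noteq> 2"
  proof
    assume "k = 2"
    then have "ys ! 1 = ys ! 3" using edge(1)[of 0] edge(1)[of 1] by (simp add: insert_commute)
    then show False using dys k \<open>k = 2\<close> by (simp add: nth_eq_iff_index_eq)
  qed
  ultimately have "length vs \<ge> 3" using \<open>k > 0\<close> len by linarith
  moreover have "distinct vs"
    unfolding distinct_conv_nth len
  proof (intro allI impI)
    fix i j assume ij: "i < k" "j < k" "i \<noteq> j"
    then have "ys ! (2 * i) \<noteq> ys ! (2 * j)" using dys k by (simp add: nth_eq_iff_index_eq)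
    then show "vs ! i \<noteq> vs ! j" using vertex ij by auto
  qed
  moreover have "set vs \<subseteq> V"
  proof
    fix v assume "v \<in> set vs"
    then obtain j where "j < k" "v = vs ! j" using len by (auto simp: in_set_conv_nth)
    then show "v \<in> V" using edge(2) simple_graph_edge_subset[OF sg] by blast
  qed
  ultimately have "graph_cycle V E vs" unfolding graph_cycle_def using edge(2) len by auto
  moreover have "FVert ` set vs \<subseteq> set xs"
  proof
    fix x assume "x \<in> FVert ` set vs"
    then obtain j where j: "j < k" "x = FVert (vs ! j)" using len by (auto simp: in_set_conv_nth)
    then have "x = ys ! (2 * j)" "2 * j < length ys" using vertex k by auto
    then show "x \<in> set xs" using ys by (metis nth_mem)
  qed
  ultimately show ?thesis using that by blast
qed

section \<open>Lists of vertex-disjoint cycles\<close>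

definition disjoint_cycles :: "'a set \<Rightarrow> 'a set set \<Rightarrow> 'a list list \<Rightarrow> bool" where
  "disjoint_cycles V E cs \<longleftrightarrow> (\<forall>c\<in>set cs. graph_cycle V E c) \<and>
     (\<forall>i < length cs. \<forall>j < length cs. i \<noteq> j \<longrightarrow> set (cs ! i) \<inter> set (cs ! j) = {})"

lemma max_disjoint_cycles_eq:
  "max_disjoint_cycles V E = Max (length ` {cs. disjoint_cycles V E cs})"
  unfolding max_disjoint_cycles_def disjoint_cycles_def by (rule arg_cong[of _ _ Max]) auto

lemma graph_cycle_length: "graph_cycle V E c \<Longrightarrow> length c \<ge> 3"
  unfolding graph_cycle_def by simp

lemma graph_cycle_nth_eq_iff:
  "graph_cycle V E c \<Longrightarrow> i < length c \<Longrightarrow> j < length c \<Longrightarrow> c ! i = c ! j \<longleftrightarrow> i = j"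
  unfolding graph_cycle_def by (simp add: nth_eq_iff_index_eq)

lemma disjoint_cycles_graph_cycle: "disjoint_cycles V E cs \<Longrightarrow> c \<in> set cs \<Longrightarrow> graph_cycle V E c"
  unfolding disjoint_cycles_def by blast

lemma disjoint_cycles_nth_disjoint:
  "disjoint_cycles V E cs \<Longrightarrow> i < length cs \<Longrightarrow> j < length cs \<Longrightarrow> i \<noteq> j \<Longrightarrow> set (cs ! i) \<inter> set (cs ! j) = {}"
  unfolding disjoint_cycles_def by blast

lemma disjoint_cycles_meet:
  assumes dcs: "disjoint_cycles V E cs" and "c \<in> set cs" "c' \<in> set cs" "x \<in> set c" "x \<in> set c'"
  shows "c = c'"
proof -
  obtain i j where "i < length cs" "c = cs ! i" "j < length cs" "c' = cs ! j"
    using assms(2,3) by (metis in_set_conv_nth)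
  then show ?thesis using disjoint_cycles_nth_disjoint[OF dcs] assms(4,5) by blast
qed

lemma distinct_disjoint_cycles:
  assumes dcs: "disjoint_cycles V E cs"
  shows "distinct cs"
  unfolding distinct_conv_nth
proof (intro allI impI)
  fix i j assume ij: "i < length cs" "j < length cs" "i \<noteq> j"
  have "cs ! i \<noteq> []"
    using graph_cycle_length[OF disjoint_cycles_graph_cycle[OF dcs nth_mem[OF ij(1)]]] by auto
  then show "cs ! i \<noteq> cs ! j" using disjoint_cycles_nth_disjoint[OF dcs ij] by auto
qed

lemma disjoint_cycles_length_le:
  assumes sg: "simple_graph V E" and dcs: "disjoint_cycles V E cs"
  shows "length cs \<le> card V"
proof -
  have "card (set cs) \<le> card V"
  proof (rule card_inj_on_le)
    have hd: "hd c \<in> set c" if "c \<in> set cs" for c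
      using graph_cycle_length[OF disjoint_cycles_graph_cycle[OF dcs that]] by (auto intro: hd_in_set)
    show "inj_on hd (set cs)"
    proof (rule inj_onI)
      fix c c' assume "c \<in> set cs" "c' \<in> set cs" "hd c = hd c'"
      then show "c = c'" using hd disjoint_cycles_meet[OF dcs] by metis
    qed
    show "hd ` set cs \<subseteq> V"
      using hd disjoint_cycles_graph_cycle[OF dcs] unfolding graph_cycle_def by blast
    show "finite V" using sg unfolding simple_graph_def by simp
  qed
  then show ?thesis using distinct_card[OF distinct_disjoint_cycles[OF dcs]] by simp
qed

lemma finite_disjoint_cycles_lengths:
  assumes "simple_graph V E"
  shows "finite (length ` {cs. disjoint_cycles V E cs})"
proof (rule finite_subset)
  show "length ` {cs. disjoint_cycles V E cs} \<subseteq> {..card V}"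
    using disjoint_cycles_length_le[OF assms] by auto
qed simp

lemma length_le_max_disjoint_cycles:
  "simple_graph V E \<Longrightarrow> disjoint_cycles V E cs \<Longrightarrow> length cs \<le> max_disjoint_cycles V E"
  unfolding max_disjoint_cycles_eq by (rule Max_ge[OF finite_disjoint_cycles_lengths]) auto

lemma max_disjoint_cycles_attained:
  assumes "simple_graph V E"
  obtains cs where "disjoint_cycles V E cs" "length cs = max_disjoint_cycles V E"
proof -
  have "disjoint_cycles V E []" unfolding disjoint_cycles_def by simp
  then have "length ` {cs. disjoint_cycles V E cs} \<noteq> {}" by blast
  from Max_in[OF finite_disjoint_cycles_lengths[OF assms] this]
  show ?thesis using that unfolding max_disjoint_cycles_eq by (metis imageE mem_Collect_eq)
qed

section \<open>The upper bound\<close>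

lemma disjoint_graph_cycles_of_dcycles:
  assumes sg: "simple_graph V E" and fm: "face_matching V E m"
  defines "C \<equiv> {cycle_arcs xs | xs. is_dcycle (reversed_arcs V E m) xs}"
  obtains cyc where "\<And>c. c \<in> C \<Longrightarrow> graph_cycle V E (cyc c)"
    "\<And>c c'. c \<in> C \<Longrightarrow> c' \<in> C \<Longrightarrow> c \<noteq> c' \<Longrightarrow> set (cyc c) \<inter> set (cyc c') = {}"
proof -
  let ?A = "reversed_arcs V E m"
  have "\<forall>c\<in>C. \<exists>xs. is_dcycle ?A xs \<and> cycle_arcs xs = c" unfolding C_def by blast
  then obtain dcyc where dcyc: "\<forall>c\<in>C. is_dcycle ?A (dcyc c) \<and> cycle_arcs (dcyc c) = c"
    by (rule bchoice[elim_format]) blast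
  have "\<forall>c\<in>C. \<exists>vs. graph_cycle V E vs \<and> FVert ` set vs \<subseteq> set (dcyc c)"
  proof
    fix c assume "c \<in> C"
    then have "is_dcycle ?A (dcyc c)" using dcyc by blast
    then obtain vs where "graph_cycle V E vs" "FVert ` set vs \<subseteq> set (dcyc c)"
      by (rule graph_cycle_of_dcycle[OF sg fm])
    then show "\<exists>vs. graph_cycle V E vs \<and> FVert ` set vs \<subseteq> set (dcyc c)" by blast
  qed
  then obtain cyc where cyc: "\<forall>c\<in>C. graph_cycle V E (cyc c) \<and> FVert ` set (cyc c) \<subseteq> set (dcyc c)"
    by (rule bchoice[elim_format]) blast
  text \<open>A common vertex of two extracted cycles lies on both directed cycles, which then coincide.\<close>
  have "set (cyc c) \<inter> set (cyc c') = {}" if c: "c \<in> C" "c' \<in> C" "c \<noteq> c'" for c c'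
  proof (rule ccontr)
    assume "set (cyc c) \<inter> set (cyc c') \<noteq> {}"
    then obtain v where "FVert v \<in> set (dcyc c)" "FVert v \<in> set (dcyc c')"
      using cyc c by blast
    then have "cycle_arcs (dcyc c) = cycle_arcs (dcyc c')"
      using cycle_arcs_eq_if_meet[OF single_valued_on_Range_reversed_arcs[OF sg fm]] dcyc c by blast
    then show False using dcyc c by simp
  qed
  then show ?thesis using that cyc by blast
qed

lemma J_le_max_disjoint_cycles:
  assumes sg: "simple_graph V E" and fm: "face_matching V E m"
  shows "J V E m \<le> max_disjoint_cycles V E"
proof -
  let ?C = "{cycle_arcs xs | xs. is_dcycle (reversed_arcs V E m) xs}"
  obtain L where L: "distinct L" "set L = ?C"
    using finite_distinct_list[OF finite_dcycle_arcs[OF finite_reversed_arcs[OF sg fm]]] by blast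
  obtain cyc where cyc: "\<And>c. c \<in> ?C \<Longrightarrow> graph_cycle V E (cyc c)"
    and disj: "\<And>c c'. c \<in> ?C \<Longrightarrow> c' \<in> ?C \<Longrightarrow> c \<noteq> c' \<Longrightarrow> set (cyc c) \<inter> set (cyc c') = {}"
    using disjoint_graph_cycles_of_dcycles[OF sg fm] by blast
  have "disjoint_cycles V E (map cyc L)"
    unfolding disjoint_cycles_def
  proof (intro conjI allI impI ballI)
    fix c assume "c \<in> set (map cyc L)"
    then show "graph_cycle V E c" using cyc L(2) by auto
  next
    fix i j assume ij: "i < length (map cyc L)" "j < length (map cyc L)" "i \<noteq> j"
    then have "L ! i \<noteq> L ! j" using L(1) by (simp add: nth_eq_iff_index_eq)
    moreover have "L ! i \<in> ?C" "L ! j \<in> ?C" using ij L(2) by (metis length_map nth_mem)+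
    ultimately show "set (map cyc L ! i) \<inter> set (map cyc L ! j) = {}" using disj ij by simp
  qed
  moreover have "length (map cyc L) = J V E m"
    unfolding J_def using L distinct_card by fastforce
  ultimately show ?thesis using length_le_max_disjoint_cycles[OF sg] by metis
qed

section \<open>The lower bound\<close>

definition cycle_edge :: "'a list \<Rightarrow> nat \<Rightarrow> 'a set" where
  "cycle_edge c i = {c ! i, c ! (Suc i mod length c)}"

lemma cycle_edge_in_edges: "graph_cycle V E c \<Longrightarrow> i < length c \<Longrightarrow> cycle_edge c i \<in> E"
  unfolding graph_cycle_def cycle_edge_def by simp

lemma cycle_edge_subset:
  assumes "i < length c"
  shows "cycle_edge c i \<subseteq> set c"
proof -
  have "Suc i mod length c < length c" using assms by (rule mod_less_of_less)
  then show ?thesis using assms unfolding cycle_edge_def by simp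
qed

lemma Suc_mod_neq: "n \<ge> 2 \<Longrightarrow> i < n \<Longrightarrow> Suc i mod n \<noteq> i"
  by (cases "Suc i < n") (auto simp: mod_if)

lemma Suc_Suc_mod_neq: "n \<ge> 3 \<Longrightarrow> i < n \<Longrightarrow> Suc (Suc i mod n) mod n \<noteq> i"
  by (cases "Suc i < n"; cases "Suc (Suc i) < n") (auto simp: mod_if)

lemma cycle_edge_inj:
  assumes gc: "graph_cycle V E c" and i: "i < length c" "j < length c"
    and eq: "cycle_edge c i = cycle_edge c j"
  shows "i = j"
proof -
  let ?n = "length c"
  have n3: "?n \<ge> 3" using graph_cycle_length[OF gc] .
  then have "0 < ?n" by linarith
  then have si: "Suc i mod ?n < ?n" "Suc j mod ?n < ?n" by simp_all
  note nth_eq = graph_cycle_nth_eq_iff[OF gc]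
  have "c ! i = c ! j \<or> c ! i = c ! (Suc j mod ?n) \<and> c ! (Suc i mod ?n) = c ! j"
    using eq unfolding cycle_edge_def by (auto simp: doubleton_eq_iff)
  then have "i = j \<or> i = Suc j mod ?n \<and> Suc i mod ?n = j"
    using nth_eq[OF i] nth_eq[OF i(1) si(2)] nth_eq[OF si(1) i(2)] by blast
  then show ?thesis using Suc_Suc_mod_neq[OF n3 i(2)] by auto
qed

definition cycle_matching :: "'a list list \<Rightarrow> ('a face \<times> 'a face) set" where
  "cycle_matching cs = {(FEdge (cycle_edge c i), FVert (c ! i)) | c i. c \<in> set cs \<and> i < length c}"

lemma face_matching_cycle_matching:
  assumes dcs: "disjoint_cycles V E cs"
  shows "face_matching V E (cycle_matching cs)"
  unfolding face_matching_def
proof (intro conjI ballI impI)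
  note gc = disjoint_cycles_graph_cycle[OF dcs]
  show "cycle_matching cs \<subseteq> face_arcs V E"
    unfolding cycle_matching_def using cycle_edge_in_edges[OF gc]
    by (auto simp: face_arcs_iff cycle_edge_def)
  fix a b assume "a \<in> cycle_matching cs" "b \<in> cycle_matching cs" "a \<noteq> b"
  then obtain c i c' i' where a: "a = (FEdge (cycle_edge c i), FVert (c ! i))" "c \<in> set cs" "i < length c"
    and b: "b = (FEdge (cycle_edge c' i'), FVert (c' ! i'))" "c' \<in> set cs" "i' < length c'"
    unfolding cycle_matching_def by blast
  have "c ! i \<noteq> c' ! i'"
  proof
    assume "c ! i = c' ! i'"
    then have "c = c'" using disjoint_cycles_meet[OF dcs a(2) b(2)] a(3) b(3) by (metis nth_mem)
    then show False using graph_cycle_nth_eq_iff[OF gc[OF a(2)]] a b \<open>a \<noteq> b\<close> \<open>c ! i = c' ! i'\<close> by auto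
  qed
  moreover have "cycle_edge c i \<noteq> cycle_edge c' i'"
  proof
    assume eq: "cycle_edge c i = cycle_edge c' i'"
    have "c ! i \<in> cycle_edge c' i'" using eq unfolding cycle_edge_def by blast
    then have "c ! i \<in> set c'" using cycle_edge_subset[OF b(3)] by blast
    then have "c = c'" using disjoint_cycles_meet[OF dcs a(2) b(2)] nth_mem[OF a(3)] by blast
    then show False using cycle_edge_inj[OF gc[OF a(2)]] eq a b \<open>a \<noteq> b\<close> by auto
  qed
  ultimately show "{fst a, snd a} \<inter> {fst b, snd b} = {}" using a(1) b(1) by auto
qed

lemma cycle_matching_nonempty:
  assumes "disjoint_cycles V E cs" "cs \<noteq> []"
  shows "cycle_matching cs \<noteq> {}"
proof -
  obtain c where c: "c \<in> set cs" using assms(2) last_in_set by blast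
  then have "0 < length c" using graph_cycle_length[OF disjoint_cycles_graph_cycle[OF assms(1) c]] by linarith
  then show ?thesis using c unfolding cycle_matching_def by blast
qed

definition face_walk :: "'a list \<Rightarrow> 'a face list" where
  "face_walk c = map (\<lambda>j. if even j then FVert (c ! (j div 2)) else FEdge (cycle_edge c (j div 2)))
     [0..<2 * length c]"

lemma length_face_walk: "length (face_walk c) = 2 * length c"
  unfolding face_walk_def by simp

lemma face_walk_even: "i < length c \<Longrightarrow> face_walk c ! (2 * i) = FVert (c ! i)"
  unfolding face_walk_def by simp

lemma face_walk_odd: "i < length c \<Longrightarrow> face_walk c ! (2 * i + 1) = FEdge (cycle_edge c i)"
  unfolding face_walk_def by simp

lemma FVert_in_face_walk: "FVert v \<in> set (face_walk c) \<Longrightarrow> v \<in> set c"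
  unfolding face_walk_def by (auto split: if_splits)

lemma distinct_face_walk:
  assumes gc: "graph_cycle V E c"
  shows "distinct (face_walk c)"
  unfolding distinct_conv_nth length_face_walk
proof (intro allI impI)
  fix j j' assume j: "j < 2 * length c" "j' < 2 * length c" "j \<noteq> j'"
  have lt: "j div 2 < length c" "j' div 2 < length c" using j by auto
  show "face_walk c ! j \<noteq> face_walk c ! j'"
  proof (cases "even j = even j'")
    case True
    then have "j div 2 \<noteq> j' div 2" using j(3) by presburger
    then show ?thesis
      using True j lt graph_cycle_nth_eq_iff[OF gc lt] cycle_edge_inj[OF gc lt]
      unfolding face_walk_def by auto
  next
    case False
    then show ?thesis using j unfolding face_walk_def by auto
  qed
qed

lemma is_dcycle_face_walk:
  assumes gc: "graph_cycle V E c" and fm: "face_matching V E m"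
    and matched: "\<And>i. i < length c \<Longrightarrow> (FEdge (cycle_edge c i), FVert (c ! i)) \<in> m"
  shows "is_dcycle (reversed_arcs V E m) (face_walk c)"
proof -
  let ?n = "length c" and ?w = "face_walk c"
  have n3: "?n \<ge> 3" using graph_cycle_length[OF gc] .
  have "(?w ! j, ?w ! (Suc j mod length ?w)) \<in> reversed_arcs V E m" if j: "j < length ?w" for j
  proof (cases "even j")
    case True
    then obtain i where i: "j = 2 * i" "i < ?n" using j by (auto simp: length_face_walk)
    then have "Suc j mod length ?w = 2 * i + 1" by (simp add: length_face_walk)
    then show ?thesis
      using matched[OF i(2)] i face_walk_even[OF i(2)] face_walk_odd[OF i(2)] by (simp add: reversed_arcs_iff)
  next
    case False
    then obtain i where i: "j = 2 * i + 1" "i < ?n" using j by (auto simp: length_face_walk elim: oddE)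
    have "0 < ?n" using n3 by linarith
    then have si: "Suc i mod ?n < ?n" by simp
    have "Suc j mod length ?w = 2 * (Suc i mod ?n)" using i by (simp add: length_face_walk mult_mod_right)
    text \<open>The other endpoint of the edge is not matched with it, as that endpoint is c!i.\<close>
    moreover have "(FEdge (cycle_edge c i), FVert (c ! (Suc i mod ?n))) \<notin> m"
    proof
      assume "(FEdge (cycle_edge c i), FVert (c ! (Suc i mod ?n))) \<in> m"
      from face_matching_eq[OF fm this matched[OF i(2)]]
      have "Suc i mod ?n = i" using graph_cycle_nth_eq_iff[OF gc si i(2)] by simp
      then show False using Suc_mod_neq[of ?n i] n3 i(2) by simp
    qed
    moreover have "(FEdge (cycle_edge c i), FVert (c ! (Suc i mod ?n))) \<in> face_arcs V E"
      using cycle_edge_in_edges[OF gc i(2)] by (simp add: face_arcs_iff cycle_edge_def)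
    ultimately show ?thesis
      using i face_walk_even[OF si] face_walk_odd[OF i(2)] by (simp add: reversed_arcs_iff)
  qed
  moreover have "length ?w \<noteq> 0" using n3 unfolding length_face_walk by linarith
  then have "?w \<noteq> []" by simp
  ultimately show ?thesis unfolding is_dcycle_def using distinct_face_walk[OF gc] by blast
qed

lemma length_le_J_cycle_matching:
  assumes sg: "simple_graph V E" and dcs: "disjoint_cycles V E cs"
  shows "length cs \<le> J V E (cycle_matching cs)"
proof -
  let ?m = "cycle_matching cs"
  let ?C = "{cycle_arcs xs | xs. is_dcycle (reversed_arcs V E ?m) xs}"
  note gc = disjoint_cycles_graph_cycle[OF dcs]
  have fm: "face_matching V E ?m" by (rule face_matching_cycle_matching[OF dcs])
  have "card (set cs) \<le> card ?C"
  proof (rule card_inj_on_le)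
    show "(\<lambda>c. cycle_arcs (face_walk c)) ` set cs \<subseteq> ?C"
      using is_dcycle_face_walk[OF gc fm] unfolding cycle_matching_def by blast
    show "finite ?C" by (rule finite_dcycle_arcs[OF finite_reversed_arcs[OF sg fm]])
    show "inj_on (\<lambda>c. cycle_arcs (face_walk c)) (set cs)"
    proof (rule inj_onI)
      fix c c' assume c: "c \<in> set cs" "c' \<in> set cs" "cycle_arcs (face_walk c) = cycle_arcs (face_walk c')"
      have "0 < length c" using graph_cycle_length[OF gc[OF c(1)]] by linarith
      then have "FVert (c ! 0) \<in> set (face_walk c)"
        using face_walk_even[of 0 c] nth_mem[of 0 "face_walk c"] by (simp add: length_face_walk)
      then have "FVert (c ! 0) \<in> set (face_walk c')" using c(3) Domain_cycle_arcs by metis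
      then have "c ! 0 \<in> set c'" by (rule FVert_in_face_walk)
      then show "c = c'" using disjoint_cycles_meet[OF dcs c(1,2)] nth_mem[OF \<open>0 < length c\<close>] by blast
    qed
  qed
  then show ?thesis unfolding J_def using distinct_card[OF distinct_disjoint_cycles[OF dcs]] by simp
qed

theorem mainTheorem4:
  fixes V :: "'a set" and E :: "'a set set"
  assumes "simple_graph V E"
  shows "eta V E = max_disjoint_cycles V E"
  unfolding eta_def
proof (rule Least_equality)
  show "\<forall>m. face_matching V E m \<and> m \<noteq> {} \<longrightarrow> J V E m \<le> max_disjoint_cycles V E"
    using J_le_max_disjoint_cycles[OF assms] by blast
next
  fix k assume bound: "\<forall>m. face_matching V E m \<and> m \<noteq> {} \<longrightarrow> J V E m \<le> k"
  obtain cs where cs: "disjoint_cycles V E cs" "length cs = max_disjoint_cycles V E"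
    using max_disjoint_cycles_attained[OF assms] .
  show "max_disjoint_cycles V E \<le> k"
  proof (cases "cs = []")
    case True
    then show ?thesis using cs(2) by simp
  next
    case False
    then have "J V E (cycle_matching cs) \<le> k"
      using bound face_matching_cycle_matching[OF cs(1)] cycle_matching_nonempty[OF cs(1)] by blast
    then show ?thesis using length_le_J_cycle_matching[OF assms cs(1)] cs(2) by simp
  qed
qed

end
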